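(* Let $\rho_1, \sigma_1$ be density operators on $\mathbb{C}^{d_1}$ and $\rho_2, \sigma_2$ density operators on $\mathbb{C}^{d_2}$. If either $D_{\min}(\rho_1\|\sigma_1)\ge D_{\max}(\rho_2\|\sigma_2)$ or $D_{\min}(\sigma_1\|\rho_1)\ge D_{\max}(\sigma_2\|\rho_2)$, then there exists a test-and-prepare channel $\mathcal{E}$ such that $\mathcal{E}(\rho_1)=\rho_2$ and $\mathcal{E}(\sigma_1)=\sigma_2$.
   Context: Logarithms are base 2. For density operators $\rho,\sigma$: $D_{\min}(\rho\|\sigma) := -\log \mathrm{tr}(\sigma \Pi_\rho)$, where $\Pi_\rho$ is the projector onto the support of $\rho$; $D_{\max}(\rho\|\sigma) := \inf\{\lambda\in\mathbb{R} : \rho \le 2^{\lambda}\sigma\}$ in the Löwner order (with $\inf\emptyset=+\infty$). A test-and-prepare channel is a map of the form $\mathcal{E}(X)=\gamma_1\,\mathrm{tr}(EX)+\gamma_2\,\mathrm{tr}((\mathds{1}-E)X)$ where $\gamma_1,\gamma_2$ are density operators and $0\le E\le \mathds{1}$. *)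

theory Defs
  imports "HOL-Analysis.Analysis"
begin

text \<open>Complex d x d matrices are modelled as complex^'n^'n with 'n a finite type, CARD('n) = d.\<close>

definition cadj :: "complex^'n^'n \<Rightarrow> complex^'n^'n" where
  "cadj A = (\<chi> i j. cnj (A $ j $ i))"

definition cscale :: "complex \<Rightarrow> complex^'n^'n \<Rightarrow> complex^'n^'n" where
  "cscale c A = (\<chi> i j. c * A $ i $ j)"

definition psd :: "complex^'n^'n \<Rightarrow> bool" where
  "psd A \<longleftrightarrow> (\<forall>v::complex^'n.
      let q = (\<Sum>i\<in>UNIV. cnj (v $ i) * (A *v v) $ i) in Im q = 0 \<and> Re q \<ge> 0)"

definition loewner_le :: "complex^'n^'n \<Rightarrow> complex^'n^'n \<Rightarrow> bool" where
  "loewner_le A B \<longleftrightarrow> psd (B - A)"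

definition density :: "complex^'n^'n \<Rightarrow> bool" where
  "density \<rho> \<longleftrightarrow> psd \<rho> \<and> trace \<rho> = 1"

definition supp_proj :: "complex^'n^'n \<Rightarrow> complex^'n^'n" where
  "supp_proj \<rho> = (THE P. P ** P = P \<and> cadj P = P \<and>
      range (\<lambda>v. P *v v) = range (\<lambda>v. \<rho> *v v))"

definition D_min :: "complex^'n^'n \<Rightarrow> complex^'n^'n \<Rightarrow> ereal" where
  "D_min \<rho> \<sigma> = (let t = Re (trace (\<sigma> ** supp_proj \<rho>)) in
      if t = 0 then \<infinity> else ereal (- log 2 t))"

text \<open>D_max(rho||sigma) = inf{lambda. rho \<le> 2^lambda sigma}, inf of the empty set = +infinity.\<close>
definition D_max :: "complex^'n^'n \<Rightarrow> complex^'n^'n \<Rightarrow> ereal" where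
  "D_max \<rho> \<sigma> = Inf {ereal l | l. loewner_le \<rho> (cscale (complex_of_real (2 powr l)) \<sigma>)}"

definition tp_channel :: "complex^'m^'m \<Rightarrow> complex^'m^'m \<Rightarrow> complex^'n^'n \<Rightarrow> complex^'n^'n \<Rightarrow> complex^'m^'m" where
  "tp_channel g1 g2 E X = cscale (trace (E ** X)) g1 + cscale (trace ((mat 1 - E) ** X)) g2"

definition is_test_and_prepare :: "(complex^'n^'n \<Rightarrow> complex^'m^'m) \<Rightarrow> bool" where
  "is_test_and_prepare \<E> \<longleftrightarrow> (\<exists>g1 g2 E. density g1 \<and> density g2 \<and> loewner_le 0 E \<and>
      loewner_le E (mat 1) \<and> \<E> = tp_channel g1 g2 E)"

end

theory Submission
  imports Defs
begin

text \<open>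
  Let P be the projector onto the support of \<open>\<rho>1\<close> and \<open>t = tr(\<sigma>1 P) \<in> [0, 1]\<close>.
  The hypothesis \<open>D_max(\<rho>2\<parallel>\<sigma>2) \<le> D_min(\<rho>1\<parallel>\<sigma>1) = - log t\<close> says exactly that
  \<open>t \<rho>2 \<le> \<sigma>2\<close>, because the infimum defining \<open>D_max\<close> is attained.
  So the channel that measures \<open>{P, 1 - P}\<close> and prepares \<open>\<rho>2\<close> or \<open>(\<sigma>2 - t \<rho>2) / (1 - t)\<close>
  sends \<open>\<rho>1\<close> (which passes the test surely) to \<open>\<rho>2\<close> and \<open>\<sigma>1\<close> to \<open>t \<rho>2 + (\<sigma>2 - t \<rho>2) = \<sigma>2\<close>.
  For \<open>t = 1\<close> the positive matrix \<open>\<sigma>2 - \<rho>2\<close> has trace 0, so \<open>\<sigma>2 = \<rho>2\<close>.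
  The second hypothesis is the first one with the roles of \<open>\<rho>\<close> and \<open>\<sigma>\<close> exchanged.
\<close>

definition cinner :: "complex^'n \<Rightarrow> complex^'n \<Rightarrow> complex" where
  "cinner z w = (\<Sum>k\<in>UNIV. cnj (z $ k) * w $ k)"

lemma orthogonal_iff_Re_cinner: "orthogonal z w \<longleftrightarrow> Re (cinner z w) = 0"
  by (simp add: orthogonal_def cinner_def inner_vec_def inner_complex_def Re_sum)

lemma cnj_cinner: "cnj (cinner z w) = cinner w z"
  by (simp add: cinner_def mult.commute)

lemma cinner_add_left: "cinner (x + y) z = cinner x z + cinner y z"
  and cinner_add_right: "cinner z (x + y) = cinner z x + cinner z y"
  and cinner_diff_left: "cinner (x - y) z = cinner x z - cinner y z"
  and cinner_diff_right: "cinner z (x - y) = cinner z x - cinner z y"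
  and cinner_scale_left: "cinner (c *s x) z = cnj c * cinner x z"
  and cinner_scale_right: "cinner z (c *s x) = c * cinner z x"
  by (simp_all add: cinner_def algebra_simps sum.distrib sum_subtractf sum_distrib_left)

lemma cinner_zero_left [simp]: "cinner 0 z = 0"
  by (simp add: cinner_def)

lemma cinner_axis_left: "cinner (axis i 1) z = z $ i"
  by (simp add: cinner_def axis_def if_distrib if_distribR cong: if_cong)

lemma cinner_self_nonneg: "0 \<le> cinner z z"
  by (simp add: cinner_def less_eq_complex_def sum_nonneg)

lemma cinner_cadj: "cinner (cadj A *v z) w = cinner z (A *v w)"
  by (simp add: cinner_def cadj_def matrix_vector_mult_def sum_distrib_left sum_distrib_right)
    (subst sum.swap, simp add: algebra_simps)

lemma cadj_cadj [simp]: "cadj (cadj A) = A"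
  by (simp add: cadj_def vec_eq_iff)

lemma cinner_cadj_right: "cinner z (cadj A *v w) = cinner (A *v z) w"
  using cinner_cadj[of "cadj A"] by simp

lemma matrix_entry_cinner: "A $ i $ j = cinner (axis i 1) (A *v axis j 1)"
  by (simp only: cinner_axis_left) (simp add: matrix_vector_mult_def axis_def if_distrib cong: if_cong)

lemma subspace_of_vec_subspace:
  fixes V :: "(complex^'n) set"
  assumes "vec.subspace V"
  shows "subspace V"
proof -
  have "c *\<^sub>R x = complex_of_real c *s x" for c and x :: "complex^'n"
    unfolding vec_eq_iff vector_scaleR_component vector_scalar_mult_def
    by (simp add: scaleR_conv_of_real)
  then show ?thesis
    using assms by (simp add: subspace_def vec.subspace_def)
qed

lemma orthogonal_projection_unique:
  fixes V :: "'a::real_inner set"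
  assumes "subspace V" "y \<in> V" "y' \<in> V"
    and "\<And>w. w \<in> V \<Longrightarrow> orthogonal (x - y) w" "\<And>w. w \<in> V \<Longrightarrow> orthogonal (x - y') w"
  shows "y = y'"
proof -
  have V: "y - y' \<in> V" using assms subspace_diff by blast
  have "(y - y') \<bullet> (y - y') = (x - y') \<bullet> (y - y') - (x - y) \<bullet> (y - y')"
    by (simp add: inner_diff_left)
  also have "\<dots> = 0" using assms(4,5)[OF V] by (simp add: orthogonal_def)
  finally show ?thesis by simp
qed

definition orth_proj :: "complex^'n^'n \<Rightarrow> bool" where
  "orth_proj P \<longleftrightarrow> P ** P = P \<and> cadj P = P"

lemma orth_proj_onto_exists:
  fixes V :: "(complex^'n) set"
  assumes V: "vec.subspace V"
  obtains P where "orth_proj P" "range ((*v) P) = V"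
proof -
  have subV: "subspace V"
    using V by (rule subspace_of_vec_subspace)
  have cinner_eq_0: "cinner z w = 0" if "\<And>w. w \<in> V \<Longrightarrow> orthogonal z w" "w \<in> V" for z w
    \<comment> \<open>the imaginary part is a real inner product with \<open>\<i> *s w \<in> V\<close>\<close>
  proof -
    have "Re (cinner z (\<i> *s w)) = 0"
      using that vec.subspace_scale[OF V] by (simp add: orthogonal_iff_Re_cinner)
    then have "Im (cinner z w) = 0"
      by (simp add: cinner_scale_right)
    moreover have "Re (cinner z w) = 0"
      using that by (simp add: orthogonal_iff_Re_cinner)
    ultimately show ?thesis
      by (simp add: complex_eq_iff)
  qed
  obtain p where p_in: "\<And>x. p x \<in> V" and p_orth: "\<And>x w. w \<in> V \<Longrightarrow> orthogonal (x - p x) w"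
  proof -
    have "\<exists>y. y \<in> V \<and> (\<forall>w\<in>V. orthogonal (x - y) w)" for x
      using orthogonal_subspace_decomp_exists[of V x] subV span_eq_iff
      by (metis add_diff_cancel_left')
    then show thesis
      using that by metis
  qed
  have p_cinner: "cinner (x - p x) w = 0" if "w \<in> V" for x w
    using cinner_eq_0 p_orth that by blast
  have p_eqI: "p x = y" if "y \<in> V" "\<And>w. w \<in> V \<Longrightarrow> cinner (x - y) w = 0" for x y
    using orthogonal_projection_unique[OF subV p_in that(1) p_orth] that(2)
    by (simp add: orthogonal_iff_Re_cinner)
  have "p (x + y) = p x + p y" for x y
  proof (rule p_eqI)
    show "p x + p y \<in> V"
      using p_in vec.subspace_add[OF V] by blast
    show "cinner (x + y - (p x + p y)) w = 0" if "w \<in> V" for w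
      using p_cinner[OF that, of x] p_cinner[OF that, of y]
      by (simp add: cinner_add_left cinner_diff_left cinner_diff_right algebra_simps)
  qed
  moreover have "p (c *s x) = c *s p x" for c x
  proof (rule p_eqI)
    show "c *s p x \<in> V"
      using p_in vec.subspace_scale[OF V] by blast
    show "cinner (c *s x - c *s p x) w = 0" if "w \<in> V" for w
      using p_cinner[OF that, of x] by (simp add: cinner_diff_left cinner_scale_left algebra_simps)
  qed
  ultimately have p_linear: "Vector_Spaces.linear (*s) (*s) p"
    by (simp add: Vector_Spaces.linear_iff vec.vector_space_axioms)
  define P where "P = matrix p"
  have P_apply: "P *v x = p x" for x
    unfolding P_def using p_linear by (rule matrix_works)
  have p_fix: "p v = v" if "v \<in> V" for v
    using that by (intro p_eqI) auto
  have p_sym: "cinner (p x) y = cinner x (p y)" for x y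
  proof -
    have "cinner x (p y) = cinner (p x) (p y)"
      using p_cinner[OF p_in, of x y] by (simp add: cinner_diff_left)
    moreover have "cinner (p x) y = cinner (p x) (p y)"
      using p_cinner[OF p_in, of y x] cnj_cinner[of "y - p y" "p x"] by (simp add: cinner_diff_right)
    ultimately show ?thesis by simp
  qed
  have "P ** P = P"
    by (simp add: matrix_eq flip: matrix_vector_mul_assoc) (simp add: P_apply p_fix p_in)
  moreover have "cadj P = P"
    by (simp add: vec_eq_iff cadj_def matrix_entry_cinner[of P] P_apply cnj_cinner p_sym)
  moreover have "range ((*v) P) = V"
  proof
    show "range ((*v) P) \<subseteq> V"
      using p_in by (auto simp: P_apply)
    show "V \<subseteq> range ((*v) P)"
      using p_fix by (metis P_apply rangeI subsetI)
  qed
  ultimately show ?thesis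
    using that orth_proj_def by blast
qed

lemma cadj_mult: "cadj (A ** B) = cadj B ** cadj A"
  by (simp add: cadj_def matrix_matrix_mult_def vec_eq_iff mult.commute)

lemma idempotent_mult_eq_of_range_subset:
  assumes "P ** P = P" "range ((*v) A) \<subseteq> range ((*v) P)"
  shows "P ** A = A"
proof (rule matrix_eq[THEN iffD2], rule allI)
  fix x
  obtain u where "A *v x = P *v u"
    using assms(2) by blast
  then show "(P ** A) *v x = A *v x"
    by (metis assms(1) matrix_vector_mul_assoc)
qed

lemma orth_proj_eqI:
  assumes "orth_proj P" "orth_proj Q" "range ((*v) P) = range ((*v) Q)"
  shows "P = Q"
proof -
  have "P ** Q = Q" "Q ** P = P"
    using assms by (auto simp: orth_proj_def intro: idempotent_mult_eq_of_range_subset)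
  then have "Q = cadj (P ** Q)"
    using assms by (simp add: orth_proj_def)
  also have "\<dots> = P"
    using assms \<open>Q ** P = P\<close> by (simp add: cadj_mult orth_proj_def)
  finally show ?thesis ..
qed

lemma supp_proj: "orth_proj (supp_proj A) \<and> range ((*v) (supp_proj A)) = range ((*v) A)"
proof -
  have "vec.subspace (range ((*v) A))"
    using vec.subspace_UNIV by (rule vec.subspace_image)
  then obtain P where P: "orth_proj P" "range ((*v) P) = range ((*v) A)"
    by (rule orth_proj_onto_exists)
  have "\<exists>!P. P ** P = P \<and> cadj P = P \<and> range ((*v) P) = range ((*v) A)"
  proof (rule ex1I[of _ P])
    show "P ** P = P \<and> cadj P = P \<and> range ((*v) P) = range ((*v) A)"
      using P by (simp add: orth_proj_def)
    show "Q = P" if "Q ** Q = Q \<and> cadj Q = Q \<and> range ((*v) Q) = range ((*v) A)" for Q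
      using orth_proj_eqI[of Q P] that P by (simp add: orth_proj_def)
  qed
  from theI'[OF this] show ?thesis
    unfolding supp_proj_def orth_proj_def by blast
qed

lemma supp_proj_mult: "supp_proj A ** A = A"
  by (rule idempotent_mult_eq_of_range_subset) (use supp_proj[of A] in \<open>simp_all add: orth_proj_def\<close>)

definition qf :: "complex^'n^'n \<Rightarrow> complex^'n \<Rightarrow> complex" where
  "qf A v = cinner v (A *v v)"

text \<open>In the order of HOL-Library.Complex_Order, \<open>0 \<le> z\<close> means that z is real and nonnegative.\<close>

lemma psd_iff_qf_nonneg: "psd A \<longleftrightarrow> (\<forall>v. 0 \<le> qf A v)"
  by (auto simp: psd_def qf_def cinner_def less_eq_complex_def)

lemma qf_diff: "qf (A - B) v = qf A v - qf B v"
  by (simp add: qf_def matrix_vector_mult_diff_rdistrib cinner_diff_right)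

lemma qf_cscale: "qf (cscale c A) v = c * qf A v"
  by (simp add: qf_def cscale_def cinner_def matrix_vector_mult_def sum_distrib_left algebra_simps)

lemma loewner_le_iff_qf: "loewner_le A B \<longleftrightarrow> (\<forall>v. qf A v \<le> qf B v)"
  by (simp add: loewner_le_def psd_iff_qf_nonneg qf_diff)

lemma qf_axis: "qf A (axis i 1) = A $ i $ i"
  by (simp add: qf_def matrix_entry_cinner)

lemma trace_eq_sum_qf_axis: "trace A = (\<Sum>i\<in>UNIV. qf A (axis i 1))"
  by (simp add: trace_def qf_axis)

lemma psd_trace_nonneg: "psd A \<Longrightarrow> 0 \<le> trace A"
  by (simp add: trace_eq_sum_qf_axis psd_iff_qf_nonneg sum_nonneg)

lemma qf_congruence: "qf (cadj Q ** A ** Q) v = qf A (Q *v v)"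
  by (simp add: qf_def cinner_cadj_right flip: matrix_vector_mul_assoc)

lemma psd_congruence: "psd A \<Longrightarrow> psd (cadj Q ** A ** Q)"
  by (simp add: psd_iff_qf_nonneg qf_congruence)

lemma psd_mat_1: "psd (mat 1)"
  by (simp add: psd_iff_qf_nonneg qf_def cinner_self_nonneg)

lemma orth_proj_psd: "orth_proj P \<Longrightarrow> psd P"
  using psd_congruence[OF psd_mat_1, of P] by (simp add: orth_proj_def)

lemma cadj_diff: "cadj (A - B) = cadj A - cadj B"
  by (simp add: cadj_def vec_eq_iff)

lemma cadj_mat_1 [simp]: "cadj (mat 1) = mat 1"
  by (simp add: cadj_def mat_def vec_eq_iff)

lemma orth_proj_compl: "orth_proj P \<Longrightarrow> orth_proj (mat 1 - P)"
  by (simp add: orth_proj_def cadj_diff matrix_eq matrix_vector_mult_diff_rdistrib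
      matrix_vector_mult_diff_distrib flip: matrix_vector_mul_assoc)

lemma trace_mult_orth_proj_nonneg:
  assumes "orth_proj P" "psd A"
  shows "0 \<le> trace (A ** P)"
proof -
  have "A ** P = (A ** P) ** P"
    using assms(1) by (simp add: orth_proj_def flip: matrix_mul_assoc)
  then have "trace (A ** P) = trace (P ** A ** P)"
    by (metis trace_mul_sym matrix_mul_assoc)
  also have "\<dots> = trace (cadj P ** A ** P)"
    using assms(1) by (simp add: orth_proj_def)
  finally show ?thesis
    using psd_trace_nonneg[OF psd_congruence[OF assms(2)]] by simp
qed

lemma qf_add: "qf A (x + y) = qf A x + qf A y + cinner x (A *v y) + cinner y (A *v x)"
  by (simp add: qf_def matrix_vector_right_distrib cinner_add_left cinner_add_right)

lemma qf_scale: "qf A (c *s x) = cnj c * c * qf A x"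
  by (simp add: qf_def vector_scalar_commute cinner_scale_left cinner_scale_right)

lemma psd_trace_eq_0:
  assumes "psd A" "trace A = 0"
  shows "A = 0"
proof -
  have nonneg: "0 \<le> qf A v" for v
    using assms(1) by (simp add: psd_iff_qf_nonneg)
  have "(\<Sum>i\<in>UNIV. qf A (axis i 1)) = 0"
    using assms(2) by (simp only: trace_eq_sum_qf_axis)
  then have diag: "A $ i $ i = 0" for i
    using nonneg by (simp add: sum_nonneg_eq_0_iff flip: qf_axis)
  have polar: "0 \<le> c * A $ i $ j + cnj c * A $ j $ i" for i j c
    using nonneg[of "axis i 1 + c *s axis j 1"]
    by (simp add: qf_add qf_scale qf_axis diag vector_scalar_commute cinner_scale_left
        cinner_scale_right flip: matrix_entry_cinner)
  have "A $ i $ j = 0" for i j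
    using polar[of 1 i j] polar[of "-1" i j] polar[of "\<i>" i j] polar[of "-\<i>" i j]
    by (simp add: less_eq_complex_def complex_eq_iff)
  then show ?thesis
    by (simp add: vec_eq_iff)
qed

lemma Re_qf_le_of_loewner_le:
  assumes "loewner_le \<rho> (cscale (complex_of_real r) \<sigma>)"
  shows "Re (qf \<rho> v) \<le> r * Re (qf \<sigma> v)"
proof -
  have "qf \<rho> v \<le> qf (cscale (complex_of_real r) \<sigma>) v"
    using assms by (simp add: loewner_le_iff_qf)
  then show ?thesis
    by (simp add: qf_cscale less_eq_complex_def)
qed

lemma D_max_gt_of_qf:
  assumes "psd \<sigma>" and less: "2 powr c * Re (qf \<sigma> v) < Re (qf \<rho> v)"
  shows "ereal c < D_max \<rho> \<sigma>"
proof -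
  define a where "a = Re (qf \<sigma> v)"
  define b where "b = Re (qf \<rho> v)"
  have "0 \<le> a"
    using assms(1) by (simp add: a_def psd_iff_qf_nonneg less_eq_complex_def)
  then have "0 < b"
    using less by (simp add: a_def b_def) (meson le_less_trans mult_nonneg_nonneg powr_ge_zero)
  have feasible: "b \<le> 2 powr l * a" if "loewner_le \<rho> (cscale (complex_of_real (2 powr l)) \<sigma>)" for l
    using Re_qf_le_of_loewner_le[OF that] by (simp add: a_def b_def)
  show ?thesis
  proof (cases "a = 0")
    case True
    then have "D_max \<rho> \<sigma> = \<infinity>"
      using feasible \<open>0 < b\<close> by (force simp: D_max_def top_ereal_def)
    then show ?thesis
      by simp
  next
    case False
    with \<open>0 \<le> a\<close> have "0 < a"
      by simp
    have "ereal (log 2 (b / a)) \<le> D_max \<rho> \<sigma>"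
      unfolding D_max_def
    proof (rule Inf_greatest, clarify)
      fix l
      assume "loewner_le \<rho> (cscale (complex_of_real (2 powr l)) \<sigma>)"
      then have "b / a \<le> 2 powr l"
        using feasible \<open>0 < a\<close> by (simp add: divide_le_eq)
      then show "ereal (log 2 (b / a)) \<le> ereal l"
        using \<open>0 < a\<close> \<open>0 < b\<close> by (simp add: log_le_iff)
    qed
    moreover have "c < log 2 (b / a)"
      using less \<open>0 < a\<close> \<open>0 < b\<close> by (simp add: a_def b_def less_log_iff pos_less_divide_eq)
    ultimately show ?thesis
      by (meson ereal_less_eq(3) less_le_trans not_le)
  qed
qed

lemma loewner_le_of_D_max_le:
  assumes "psd \<rho>" "psd \<sigma>" "D_max \<rho> \<sigma> \<le> ereal c"
  shows "loewner_le \<rho> (cscale (complex_of_real (2 powr c)) \<sigma>)"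
  unfolding loewner_le_iff_qf
proof
  fix v
  have "Re (qf \<rho> v) \<le> 2 powr c * Re (qf \<sigma> v)"
    using D_max_gt_of_qf[OF assms(2), of c v \<rho>] assms(3) by (meson not_le)
  moreover have "Im (qf \<rho> v) = 0" "Im (qf \<sigma> v) = 0"
    using assms(1,2) by (simp_all add: psd_iff_qf_nonneg less_eq_complex_def)
  ultimately show "qf \<rho> v \<le> qf (cscale (complex_of_real (2 powr c)) \<sigma>) v"
    by (simp add: qf_cscale less_eq_complex_def)
qed

lemma psd_diff_scaled_of_D_max_le:
  assumes "psd \<rho>" "psd \<sigma>" "0 < t" "D_max \<rho> \<sigma> \<le> ereal (- log 2 t)"
  shows "psd (\<sigma> - cscale (complex_of_real t) \<rho>)"
proof -
  have "loewner_le \<rho> (cscale (complex_of_real (2 powr (- log 2 t))) \<sigma>)"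
    using assms by (intro loewner_le_of_D_max_le)
  moreover have "2 powr (- log 2 t) = 1 / t"
    using \<open>0 < t\<close> by (simp add: powr_minus_divide)
  ultimately have le: "qf \<rho> v \<le> complex_of_real (1 / t) * qf \<sigma> v" for v
    by (simp add: loewner_le_iff_qf qf_cscale)
  have "complex_of_real t * qf \<rho> v \<le> qf \<sigma> v" for v
  proof -
    have "complex_of_real t * qf \<rho> v \<le> complex_of_real t * (complex_of_real (1 / t) * qf \<sigma> v)"
      using \<open>0 < t\<close> by (intro mult_left_mono le) (simp add: less_eq_complex_def)
    also have "\<dots> = qf \<sigma> v"
      using \<open>0 < t\<close> by (simp add: mult.assoc flip: of_real_mult)
    finally show ?thesis .
  qed
  then show ?thesis
    by (simp add: psd_iff_qf_nonneg qf_diff qf_cscale)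
qed

lemma matrix_diff_rdistrib: "(A - B) ** C = A ** C - B ** (C :: 'a::ring_1^'n^'n)"
  by (simp add: matrix_matrix_mult_def vec_eq_iff sum_subtractf left_diff_distrib)

lemma trace_compl_mult:
  fixes E X :: "'a::comm_ring_1^'n^'n"
  shows "trace ((mat 1 - E) ** X) = trace X - trace (E ** X)"
  by (simp add: matrix_diff_rdistrib matrix_mul_lid trace_sub)

lemma trace_cscale: "trace (cscale c A) = c * trace A"
  by (simp add: trace_def cscale_def sum_distrib_left)

lemma test_and_prepare_of_test:
  fixes \<rho>1 \<sigma>1 :: "complex^'n^'n" and \<rho>2 \<sigma>2 :: "complex^'m^'m"
  assumes "density \<rho>2" "density \<sigma>2" "trace \<rho>1 = 1" "trace \<sigma>1 = 1"
    and "loewner_le 0 E" "loewner_le E (mat 1)"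
    and "trace (E ** \<rho>1) = 1" "trace (E ** \<sigma>1) = complex_of_real t"
    and "psd (\<sigma>2 - cscale (complex_of_real t) \<rho>2)"
  shows "\<exists>\<E>. is_test_and_prepare \<E> \<and> \<E> \<rho>1 = \<rho>2 \<and> \<E> \<sigma>1 = \<sigma>2"
proof -
  have trace_rest: "trace (\<sigma>2 - cscale (complex_of_real t) \<rho>2) = complex_of_real (1 - t)"
    using assms(1,2) by (simp add: density_def trace_sub trace_cscale)
  obtain g where g: "density g" "cscale (complex_of_real (1 - t)) g = \<sigma>2 - cscale (complex_of_real t) \<rho>2"
  proof (cases "t = 1")
    case True
    then have "\<sigma>2 - cscale (complex_of_real t) \<rho>2 = 0"
      using psd_trace_eq_0[OF assms(9)] trace_rest by simp
    then show thesis
      using that[of \<rho>2] assms(1) True by (simp add: cscale_def vec_eq_iff)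
  next
    case False
    then have "t < 1"
      using psd_trace_nonneg[OF assms(9)] by (simp add: trace_rest less_eq_complex_def)
    define g where "g = cscale (complex_of_real (1 / (1 - t))) (\<sigma>2 - cscale (complex_of_real t) \<rho>2)"
    have "psd g"
      using assms(9) \<open>t < 1\<close>
      by (simp add: g_def psd_iff_qf_nonneg qf_cscale less_eq_complex_def mult_nonneg_nonneg)
    moreover have "trace g = 1"
      using trace_rest \<open>t < 1\<close> by (simp add: g_def trace_cscale)
    moreover have "cscale (complex_of_real (1 - t)) g = \<sigma>2 - cscale (complex_of_real t) \<rho>2"
      using \<open>t < 1\<close> by (simp add: g_def cscale_def vec_eq_iff)
    ultimately show thesis
      using that by (simp add: density_def)
  qed
  have "is_test_and_prepare (tp_channel \<rho>2 g E)"
    using assms(1,5,6) g(1) by (auto simp: is_test_and_prepare_def)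
  moreover have "tp_channel \<rho>2 g E \<rho>1 = \<rho>2"
    using assms(3,7) by (simp add: tp_channel_def trace_compl_mult cscale_def vec_eq_iff)
  moreover have "tp_channel \<rho>2 g E \<sigma>1 = \<sigma>2"
    using assms(4,8) g(2) by (simp add: tp_channel_def trace_compl_mult cscale_def vec_eq_iff)
  ultimately show ?thesis
    by blast
qed

lemma test_and_prepare_of_D_max_le_D_min:
  fixes \<rho>1 \<sigma>1 :: "complex^'n^'n" and \<rho>2 \<sigma>2 :: "complex^'m^'m"
  assumes "density \<rho>1" "density \<sigma>1" "density \<rho>2" "density \<sigma>2"
    and "D_max \<rho>2 \<sigma>2 \<le> D_min \<rho>1 \<sigma>1"
  shows "\<exists>\<E>. is_test_and_prepare \<E> \<and> \<E> \<rho>1 = \<rho>2 \<and> \<E> \<sigma>1 = \<sigma>2"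
proof -
  define P where "P = supp_proj \<rho>1"
  define t where "t = Re (trace (\<sigma>1 ** P))"
  have P: "orth_proj P"
    using supp_proj[of \<rho>1] by (simp add: P_def)
  have "0 \<le> trace (\<sigma>1 ** P)"
    using assms(2) by (intro trace_mult_orth_proj_nonneg P) (simp add: density_def)
  then have "0 \<le> t" and trace_P_\<sigma>1: "trace (P ** \<sigma>1) = complex_of_real t"
    by (simp_all add: t_def less_eq_complex_def complex_eq_iff trace_mul_sym[of P])
  have scaled: "psd (\<sigma>2 - cscale (complex_of_real t) \<rho>2)"
  proof (cases "t = 0")
    case True
    then show ?thesis
      using assms(4) by (simp add: density_def psd_iff_qf_nonneg qf_diff qf_cscale)
  next
    case False
    then have "D_max \<rho>2 \<sigma>2 \<le> ereal (- log 2 t)"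
      using assms(5) by (simp add: D_min_def Let_def t_def P_def)
    with False \<open>0 \<le> t\<close> assms(3,4) show ?thesis
      by (intro psd_diff_scaled_of_D_max_le) (simp_all add: density_def)
  qed
  have test: "loewner_le 0 P" "loewner_le P (mat 1)"
    using orth_proj_psd[OF P] orth_proj_psd[OF orth_proj_compl[OF P]]
    by (simp_all add: loewner_le_def)
  have traces: "trace \<rho>1 = 1" "trace \<sigma>1 = 1"
    using assms(1,2) by (simp_all add: density_def)
  then have "trace (P ** \<rho>1) = 1"
    by (simp add: P_def supp_proj_mult)
  then show ?thesis
    using test_and_prepare_of_test[OF assms(3,4) traces test] trace_P_\<sigma>1 scaled by blast
qed

theorem corollary1:
  fixes \<rho>1 \<sigma>1 :: "complex^'n^'n" and \<rho>2 \<sigma>2 :: "complex^'m^'m"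
  assumes "density \<rho>1" and "density \<sigma>1" and "density \<rho>2" and "density \<sigma>2"
    and "D_min \<rho>1 \<sigma>1 \<ge> D_max \<rho>2 \<sigma>2 \<or> D_min \<sigma>1 \<rho>1 \<ge> D_max \<sigma>2 \<rho>2"
  shows "\<exists>\<E>. is_test_and_prepare \<E> \<and> \<E> \<rho>1 = \<rho>2 \<and> \<E> \<sigma>1 = \<sigma>2"
  using assms(5)
proof
  assume "D_min \<rho>1 \<sigma>1 \<ge> D_max \<rho>2 \<sigma>2"
  then show ?thesis
    using test_and_prepare_of_D_max_le_D_min assms(1-4) by blast
next
  assume "D_min \<sigma>1 \<rho>1 \<ge> D_max \<sigma>2 \<rho>2"
  then show ?thesis
    using test_and_prepare_of_D_max_le_D_min[OF assms(2,1,4,3)] by blast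
qed

end
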